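(* Let $(T,\sigma)$ be a leaf-colored tree in which every inner vertex has exactly two children. Then for any three distinct colors $r,s,t$, no connected component of the subgraph of $G(T,\sigma)$ induced by the vertices of colors $r,s,t$ is of Type (C); that is, no such component contains an induced $6$-cycle in which any three consecutive vertices have pairwise distinct colors.
   Context: A planted phylogenetic tree $T$ is a rooted tree with distinguished root $0_T$ of degree $1$, all other non-leaf vertices of degree $\ge3$; $L(T)$ its leaves (excluding $0_T$), $|L(T)|\ge2$. $\preceq_T$ is the ancestor order towards $0_T$; $\mathrm{child}(v)$, $\mathrm{lca}_T$ as usual. $\sigma$ maps $L(T)$ to a set of colors. $y$ is a best match of $x$ if $\sigma(x)\ne\sigma(y)$ and $\mathrm{lca}_T(x,y)\preceq_T\mathrm{lca}_T(x,y')$ for all $y'$ with $\sigma(y')=\sigma(y)$. The RBMG $G(T,\sigma)$ is the vertex-colored undirected graph on $L(T)$ whose edges are the reciprocal best match pairs. A connected component of a 3-colored induced subgraph is of Type (C) if it contains an induced cycle on six vertices such that any three consecutive vertices of the cycle have pairwise distinct colors. *)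

theory Defs
  imports Main
begin

definition anc :: "('v \<Rightarrow> 'v) \<Rightarrow> 'v \<Rightarrow> 'v \<Rightarrow> bool" where
  "anc par x y \<longleftrightarrow> (\<exists>n. (par ^^ n) x = y)"
  \<comment> \<open>x \<preceq>_T y: y lies on the path from x to the root (y is an ancestor of x or y = x)\<close>

definition children :: "'v set \<Rightarrow> 'v \<Rightarrow> ('v \<Rightarrow> 'v) \<Rightarrow> 'v \<Rightarrow> 'v set" where
  "children V rt par v = {u \<in> V. u \<noteq> rt \<and> par u = v}"

definition leaves :: "'v set \<Rightarrow> 'v \<Rightarrow> ('v \<Rightarrow> 'v) \<Rightarrow> 'v set" where
  "leaves V rt par = {v \<in> V. v \<noteq> rt \<and> children V rt par v = {}}"

definition rooted_tree :: "'v set \<Rightarrow> 'v \<Rightarrow> ('v \<Rightarrow> 'v) \<Rightarrow> bool" where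
  "rooted_tree V rt par \<longleftrightarrow> finite V \<and> rt \<in> V \<and> par rt = rt \<and>
     (\<forall>v\<in>V. par v \<in> V) \<and> (\<forall>v\<in>V. anc par v rt)"

text \<open>Planted phylogenetic tree: root has degree 1 (exactly one child), every other
  non-leaf vertex has degree \<ge> 3 (at least two children), at least two leaves.\<close>
definition planted_phylo_tree :: "'v set \<Rightarrow> 'v \<Rightarrow> ('v \<Rightarrow> 'v) \<Rightarrow> bool" where
  "planted_phylo_tree V rt par \<longleftrightarrow> rooted_tree V rt par \<and>
     card (children V rt par rt) = 1 \<and>
     (\<forall>v\<in>V. v \<noteq> rt \<and> v \<notin> leaves V rt par \<longrightarrow> card (children V rt par v) \<ge> 2) \<and>
     card (leaves V rt par) \<ge> 2"

definition inner_vertices :: "'v set \<Rightarrow> 'v \<Rightarrow> ('v \<Rightarrow> 'v) \<Rightarrow> 'v set" where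
  "inner_vertices V rt par = {v \<in> V. v \<noteq> rt \<and> v \<notin> leaves V rt par}"

definition lca :: "'v set \<Rightarrow> ('v \<Rightarrow> 'v) \<Rightarrow> 'v \<Rightarrow> 'v \<Rightarrow> 'v" where
  "lca V par x y = (THE z. z \<in> V \<and> anc par x z \<and> anc par y z \<and>
      (\<forall>w\<in>V. anc par x w \<and> anc par y w \<longrightarrow> anc par z w))"

definition best_match :: "'v set \<Rightarrow> 'v \<Rightarrow> ('v \<Rightarrow> 'v) \<Rightarrow> ('v \<Rightarrow> 'c) \<Rightarrow> 'v \<Rightarrow> 'v \<Rightarrow> bool" where
  "best_match V rt par \<sigma> x y \<longleftrightarrow> x \<in> leaves V rt par \<and> y \<in> leaves V rt par \<and> \<sigma> x \<noteq> \<sigma> y \<and>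
     (\<forall>y'\<in>leaves V rt par. \<sigma> y' = \<sigma> y \<longrightarrow> anc par (lca V par x y) (lca V par x y'))"

definition rbmg_edge :: "'v set \<Rightarrow> 'v \<Rightarrow> ('v \<Rightarrow> 'v) \<Rightarrow> ('v \<Rightarrow> 'c) \<Rightarrow> 'v \<Rightarrow> 'v \<Rightarrow> bool" where
  "rbmg_edge V rt par \<sigma> x y \<longleftrightarrow> best_match V rt par \<sigma> x y \<and> best_match V rt par \<sigma> y x"

definition col_verts :: "'v set \<Rightarrow> 'v \<Rightarrow> ('v \<Rightarrow> 'v) \<Rightarrow> ('v \<Rightarrow> 'c) \<Rightarrow> 'c set \<Rightarrow> 'v set" where
  "col_verts V rt par \<sigma> S = {x \<in> leaves V rt par. \<sigma> x \<in> S}"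

definition component :: "('v \<Rightarrow> 'v \<Rightarrow> bool) \<Rightarrow> 'v set \<Rightarrow> 'v \<Rightarrow> 'v set" where
  "component E H x = {y. (x, y) \<in> ({(a, b). a \<in> H \<and> b \<in> H \<and> E a b})\<^sup>*}"

definition is_component :: "('v \<Rightarrow> 'v \<Rightarrow> bool) \<Rightarrow> 'v set \<Rightarrow> 'v set \<Rightarrow> bool" where
  "is_component E H C \<longleftrightarrow> (\<exists>x\<in>H. C = component E H x)"

definition typeC :: "('v \<Rightarrow> 'v \<Rightarrow> bool) \<Rightarrow> ('v \<Rightarrow> 'c) \<Rightarrow> 'v set \<Rightarrow> bool" where
  "typeC E \<sigma> C \<longleftrightarrow> (\<exists>v :: nat \<Rightarrow> 'v.
     (\<forall>i<6. v i \<in> C) \<and> inj_on v {0..<6} \<and>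
     (\<forall>i<6. \<forall>j<6. E (v i) (v j) \<longleftrightarrow> (j = (i + 1) mod 6 \<or> i = (j + 1) mod 6)) \<and>
     (\<forall>i<6. \<sigma> (v i) \<noteq> \<sigma> (v ((i + 1) mod 6)) \<and> \<sigma> (v i) \<noteq> \<sigma> (v ((i + 2) mod 6)) \<and>
            \<sigma> (v ((i + 1) mod 6)) \<noteq> \<sigma> (v ((i + 2) mod 6))))"

end

theory Submission
  imports Defs
begin

text \<open>Colour the induced 6-cycle v0 ... v5; with three colours and any three consecutive
  vertices coloured differently, v(i+3) has the colour of v(i). Along the path v0 ... v5 some
  consecutive pair v(i), v(i+1) has an lca lying above all six vertices. Then v(i+3) is below
  lca(v(i), v(i+1)) and has the colour of v(i); in a binary tree three leaves cannot branch
  apart at a single vertex, which forces v(i+3) to be a reciprocal best match of v(i+1) as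
  well. But v(i+3) and v(i+1) are not adjacent in the induced cycle.\<close>

lemma funpow_fixed: "f x = x \<Longrightarrow> (f ^^ n) x = x"
  by (induction n) auto

lemma funpow_periodic: "(f ^^ p) x = x \<Longrightarrow> (f ^^ (k * p)) x = x"
  by (induction k) (simp_all add: funpow_add)

lemma anc_refl [simp]: "anc par x x"
  unfolding anc_def by (metis funpow_0)

lemma anc_iter: "anc par x ((par ^^ n) x)"
  unfolding anc_def by blast

lemma anc_parent: "anc par x (par x)"
  using anc_iter[of par x 1] by simp

lemma anc_trans: "anc par a b \<Longrightarrow> anc par b c \<Longrightarrow> anc par a c"
  unfolding anc_def by (metis comp_apply funpow_add)

lemma anc_parent_trans: "anc par (par x) y \<Longrightarrow> anc par x y"
  using anc_parent anc_trans by metis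

lemma anc_chain: "anc par x a \<Longrightarrow> anc par x b \<Longrightarrow> anc par a b \<or> anc par b a"
proof -
  assume "anc par x a" "anc par x b"
  then obtain n m where n: "(par ^^ n) x = a" and m: "(par ^^ m) x = b"
    unfolding anc_def by blast
  have "(par ^^ (m - n)) a = b" if "n \<le> m"
    using that n m by (metis comp_apply funpow_add le_add_diff_inverse2)
  moreover have "(par ^^ (n - m)) b = a" if "m \<le> n"
    using that n m by (metis comp_apply funpow_add le_add_diff_inverse2)
  ultimately show ?thesis
    unfolding anc_def by (meson nat_le_linear)
qed

lemma lca_commute: "lca V par x y = lca V par y x"
  unfolding lca_def by (rule arg_cong[where f = The]) auto

locale parent_tree =
  fixes V :: "'v set" and rt :: 'v and par :: "'v \<Rightarrow> 'v"
  assumes rooted: "rooted_tree V rt par"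
begin

lemma finite_V: "finite V" and parent_root: "par rt = rt"
  and parent_in_V: "v \<in> V \<Longrightarrow> par v \<in> V" and anc_root: "v \<in> V \<Longrightarrow> anc par v rt"
  using rooted unfolding rooted_tree_def by auto

lemma iter_in_V: "x \<in> V \<Longrightarrow> (par ^^ n) x \<in> V"
  by (induction n) (auto intro: parent_in_V)

lemma anc_in_V: "x \<in> V \<Longrightarrow> anc par x y \<Longrightarrow> y \<in> V"
  unfolding anc_def using iter_in_V by blast

lemma leaf_in_V: "x \<in> leaves V rt par \<Longrightarrow> x \<in> V"
  unfolding leaves_def by simp

lemma fixed_point_is_root: "v \<in> V \<Longrightarrow> par v = v \<Longrightarrow> v = rt"
  using anc_root[of v] funpow_fixed[of par v] unfolding anc_def by metis

lemma anc_antisym: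
  assumes "a \<in> V" "anc par a b" "anc par b a"
  shows "a = b"
proof -
  obtain n m where n: "(par ^^ n) a = b" and m: "(par ^^ m) b = a"
    using assms unfolding anc_def by blast
  have period: "(par ^^ (m + n)) a = a"
    using n m by (simp add: funpow_add)
  show ?thesis
  proof (cases "m + n = 0")
    case True
    then show ?thesis using n by simp
  next
    case False
    obtain j where j: "(par ^^ j) a = rt"
      using anc_root[OF assms(1)] unfolding anc_def by blast
    have "j \<le> j * (m + n)" using False by (cases "m + n") auto
    then obtain d where d: "j * (m + n) = d + j" by (metis le_add_diff_inverse2)
    \<comment> \<open>a is periodic but eventually reaches the fixed point rt, so a is rt itself\<close>
    have "a = (par ^^ (d + j)) a" using funpow_periodic[OF period, of j] d by simp
    also have "\<dots> = rt" using j funpow_fixed[of par rt, OF parent_root] by (simp add: funpow_add)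
    finally show ?thesis using n funpow_fixed[of par rt, OF parent_root] by simp
  qed
qed

lemma lca_unique:
  assumes "x \<in> V" "y \<in> V"
  shows "\<exists>!z. z \<in> V \<and> anc par x z \<and> anc par y z \<and>
    (\<forall>w\<in>V. anc par x w \<and> anc par y w \<longrightarrow> anc par z w)"
proof -
  obtain m where "(par ^^ m) x = rt"
    using anc_root[OF assms(1)] unfolding anc_def by blast
  then have ex: "\<exists>k. anc par y ((par ^^ k) x)"
    using anc_root[OF assms(2)] by metis
  define k where "k = (LEAST k. anc par y ((par ^^ k) x))"
  have y_k: "anc par y ((par ^^ k) x)"
    unfolding k_def by (rule LeastI_ex[OF ex])
  have least: "anc par ((par ^^ k) x) w" if w: "anc par x w" "anc par y w" for w
  proof -
    obtain j where j: "(par ^^ j) x = w" using w(1) unfolding anc_def by blast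
    have "k \<le> j" unfolding k_def by (rule Least_le) (use w(2) j in simp)
    then have "(par ^^ (j - k)) ((par ^^ k) x) = w"
      using j by (metis comp_apply funpow_add le_add_diff_inverse2)
    then show ?thesis unfolding anc_def by blast
  qed
  show ?thesis
  proof (rule ex_ex1I)
    show "\<exists>z. z \<in> V \<and> anc par x z \<and> anc par y z \<and>
      (\<forall>w\<in>V. anc par x w \<and> anc par y w \<longrightarrow> anc par z w)"
      using iter_in_V[OF assms(1)] anc_iter[of par x k] y_k least by blast
  next
    fix z z'
    assume z: "z \<in> V \<and> anc par x z \<and> anc par y z \<and> (\<forall>w\<in>V. anc par x w \<and> anc par y w \<longrightarrow> anc par z w)"
      and z': "z' \<in> V \<and> anc par x z' \<and> anc par y z' \<and> (\<forall>w\<in>V. anc par x w \<and> anc par y w \<longrightarrow> anc par z' w)"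
    then have "anc par z z'" "anc par z' z" by simp_all
    then show "z = z'" using anc_antisym z by simp
  qed
qed

lemma lca_props:
  assumes "x \<in> V" "y \<in> V"
  shows "lca V par x y \<in> V \<and> anc par x (lca V par x y) \<and> anc par y (lca V par x y) \<and>
    (\<forall>w\<in>V. anc par x w \<and> anc par y w \<longrightarrow> anc par (lca V par x y) w)"
  unfolding lca_def by (rule theI'[OF lca_unique[OF assms]])

lemma lca_in_V: "x \<in> V \<Longrightarrow> y \<in> V \<Longrightarrow> lca V par x y \<in> V"
  and anc_lca1: "x \<in> V \<Longrightarrow> y \<in> V \<Longrightarrow> anc par x (lca V par x y)"
  and anc_lca2: "x \<in> V \<Longrightarrow> y \<in> V \<Longrightarrow> anc par y (lca V par x y)"
  and lca_least: "x \<in> V \<Longrightarrow> y \<in> V \<Longrightarrow> anc par x w \<Longrightarrow> anc par y w \<Longrightarrow> anc par (lca V par x y) w"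
  using lca_props[of x y] anc_in_V[of x w] by auto

lemma lca_three:
  assumes "a \<in> V" "b \<in> V" "c \<in> V"
  shows "anc par (lca V par a c) (lca V par a b) \<or> anc par (lca V par a c) (lca V par b c)"
proof -
  let ?X = "lca V par a b" and ?Y = "lca V par b c"
  have "anc par b ?X" "anc par b ?Y" using anc_lca1 anc_lca2 assms by simp_all
  then have "anc par ?X ?Y \<or> anc par ?Y ?X" by (rule anc_chain)
  then show ?thesis
  proof
    assume "anc par ?X ?Y"
    with anc_lca1[OF assms(1,2)] have "anc par a ?Y" by (rule anc_trans)
    then show ?thesis using lca_least anc_lca2 assms by blast
  next
    assume "anc par ?Y ?X"
    with anc_lca2[OF assms(2,3)] have "anc par c ?X" by (rule anc_trans)
    then show ?thesis using lca_least anc_lca1 assms by blast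
  qed
qed

lemma child_towards:
  assumes "x \<in> V" "anc par x w" "x \<noteq> w"
  shows "\<exists>c\<in>children V rt par w. anc par x c"
proof -
  obtain n where "(par ^^ n) x = w" using assms(2) unfolding anc_def by blast
  then show ?thesis
    using assms(1,3)
  proof (induction n arbitrary: x)
    case 0
    then show ?case by simp
  next
    case (Suc n)
    show ?case
    proof (cases "par x = w")
      case True
      then have "x \<noteq> rt" using Suc.prems parent_root by auto
      then show ?thesis using True Suc.prems unfolding children_def by auto
    next
      case False
      have "(par ^^ n) (par x) = w" using Suc.prems(1) by (simp add: funpow_swap1)
      then obtain c where "c \<in> children V rt par w" "anc par (par x) c"
        using Suc.IH[of "par x"] False parent_in_V[OF Suc.prems(2)] by blast
      then show ?thesis using anc_parent_trans[of par x c] by blast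
    qed
  qed
qed

lemma leaf_anc_eq:
  assumes "x \<in> leaves V rt par" "y \<in> V" "anc par y x"
  shows "y = x"
proof (rule ccontr)
  assume "y \<noteq> x"
  then obtain c where "c \<in> children V rt par x" using child_towards[OF assms(2,3)] by blast
  then show False using assms(1) unfolding leaves_def by blast
qed

lemma lca_ne_above_child:
  assumes "c \<in> children V rt par w" "x \<in> V" "y \<in> V" "anc par x c" "anc par y c"
  shows "lca V par x y \<noteq> w"
proof
  assume lca: "lca V par x y = w"
  have c: "c \<in> V" "c \<noteq> rt" "par c = w"
    using assms(1) unfolding children_def by auto
  have "anc par w c" using lca_least assms(2-5) lca by blast
  moreover have "anc par c w" using anc_parent[of par c] c(3) by simp
  ultimately have "c = w" using anc_antisym c(1) by blast
  then show False using fixed_point_is_root c by auto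
qed

lemma consecutive_lca_top:
  assumes "\<And>j. j \<le> Suc n \<Longrightarrow> v j \<in> V"
  shows "\<exists>i\<le>n. \<forall>j\<le>Suc n. anc par (v j) (lca V par (v i) (v (Suc i)))"
  using assms
proof (induction n)
  case 0
  then show ?case using anc_lca1 anc_lca2 by (auto simp: le_Suc_eq)
next
  case (Suc n)
  then obtain i where i: "i \<le> n" and top: "\<forall>j\<le>Suc n. anc par (v j) (lca V par (v i) (v (Suc i)))"
    by force
  let ?L = "lca V par (v i) (v (Suc i))" and ?M = "lca V par (v (Suc n)) (v (Suc (Suc n)))"
  have last: "anc par (v (Suc (Suc n))) ?M"
    using anc_lca2 Suc.prems by simp
  show ?case
  proof (cases "anc par ?M ?L")
    case True
    have "anc par (v j) ?L" if "j \<le> Suc (Suc n)" for j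
      using that top anc_trans[OF last True] by (cases "j = Suc (Suc n)") (auto simp: le_Suc_eq)
    then show ?thesis using i le_SucI by blast
  next
    case False
    then have "anc par ?L ?M"
      using anc_chain[of par "v (Suc n)" ?L ?M] top anc_lca1 Suc.prems by simp
    have "anc par (v j) ?M" if "j \<le> Suc (Suc n)" for j
    proof (cases "j = Suc (Suc n)")
      case False
      then have "j \<le> Suc n" using that by simp
      then have "anc par (v j) ?L" using top by blast
      then show ?thesis using \<open>anc par ?L ?M\<close> by (rule anc_trans)
    qed (use last in simp)
    then show ?thesis by blast
  qed
qed

end

locale binary_parent_tree = parent_tree +
  assumes at_most_two_children: "w \<in> V \<Longrightarrow> card (children V rt par w) \<le> 2"
begin

lemma no_three_branches:
  assumes V: "x \<in> V" "y \<in> V" "z \<in> V" and ne: "x \<noteq> w" "y \<noteq> w" "z \<noteq> w"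
    and lca: "lca V par x y = w" "lca V par x z = w" "lca V par y z = w"
  shows False
proof -
  have "anc par x w" "anc par y w" "anc par z w"
    using V lca anc_lca1 anc_lca2 by metis+
  then obtain cx cy cz where
    cx: "cx \<in> children V rt par w" "anc par x cx" and
    cy: "cy \<in> children V rt par w" "anc par y cy" and
    cz: "cz \<in> children V rt par w" "anc par z cz"
    using child_towards V ne by meson
  have "cx \<noteq> cy" "cx \<noteq> cz" "cy \<noteq> cz"
    using lca_ne_above_child V lca cx cy cz by metis+
  then have "card {cx, cy, cz} = 3" by simp
  moreover have "card {cx, cy, cz} \<le> card (children V rt par w)"
    using cx cy cz finite_V unfolding children_def by (intro card_mono) auto
  moreover have "w \<in> V" using lca_in_V V lca by blast
  ultimately show False using at_most_two_children by fastforce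
qed

text \<open>Binarity forces lca p p' strictly below lca p q = lca p' q, so the best-match bound
  of p towards the colour of q transfers to p'.\<close>
lemma rbmg_edge_to_same_colour_below:
  assumes L: "p \<in> leaves V rt par" "q \<in> leaves V rt par" "p' \<in> leaves V rt par"
    and ne: "p \<noteq> q" "p \<noteq> p'" "q \<noteq> p'"
    and colour: "\<sigma> p' = \<sigma> p"
    and edge: "rbmg_edge V rt par \<sigma> p q"
    and below: "anc par p' (lca V par p q)"
  shows "rbmg_edge V rt par \<sigma> p' q"
proof -
  define w where "w = lca V par p q"
  have V: "p \<in> V" "q \<in> V" "p' \<in> V" using L leaf_in_V by auto
  have bm_pq: "best_match V rt par \<sigma> p q" and bm_qp: "best_match V rt par \<sigma> q p"
    using edge unfolding rbmg_edge_def by auto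
  have "anc par w (lca V par q p')"
    using bm_qp L colour lca_commute unfolding best_match_def w_def by metis
  moreover have "anc par (lca V par q p') w"
    using lca_least V below anc_lca2 unfolding w_def by metis
  ultimately have qp': "lca V par q p' = w" using anc_antisym lca_in_V V by blast
  then have p'q: "lca V par p' q = w" using lca_commute by metis
  have w_p: "p \<noteq> w" using leaf_anc_eq L V ne anc_lca2 w_def by metis
  have w_q: "q \<noteq> w" using leaf_anc_eq L V ne anc_lca1 w_def by metis
  have w_p': "p' \<noteq> w" using leaf_anc_eq L V ne anc_lca1 qp' by metis
  have pp': "lca V par p p' \<noteq> w"
    using no_three_branches[OF V(1,3,2) w_p w_p' w_q _ w_def[symmetric] p'q] by blast
  have "best_match V rt par \<sigma> p' q"
    unfolding best_match_def
  proof (intro conjI ballI impI)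
    show "p' \<in> leaves V rt par" "q \<in> leaves V rt par" by fact+
    show "\<sigma> p' \<noteq> \<sigma> q" using bm_pq colour unfolding best_match_def by auto
    fix y assume y: "y \<in> leaves V rt par" "\<sigma> y = \<sigma> q"
    then have yV: "y \<in> V" using leaf_in_V by auto
    have w_py: "anc par w (lca V par p y)" using bm_pq y unfolding best_match_def w_def by auto
    have "anc par (lca V par p y) (lca V par p p') \<or> anc par (lca V par p y) (lca V par p' y)"
      using lca_three V yV by blast
    then show "anc par (lca V par p' q) (lca V par p' y)"
    proof
      assume "anc par (lca V par p y) (lca V par p p')"
      with w_py have "anc par w (lca V par p p')" by (rule anc_trans)
      moreover have "anc par (lca V par p p') w"
        using lca_least V below anc_lca1 unfolding w_def by metis
      ultimately show ?thesis using anc_antisym lca_in_V V pp' by blast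
    next
      assume "anc par (lca V par p y) (lca V par p' y)"
      with w_py show ?thesis unfolding p'q by (rule anc_trans)
    qed
  qed
  moreover have "best_match V rt par \<sigma> q p'"
    using bm_qp colour L qp' lca_commute unfolding best_match_def w_def by metis
  ultimately show ?thesis unfolding rbmg_edge_def by simp
qed

lemma no_rbmg_hexagon:
  assumes L: "\<And>i::nat. i < 6 \<Longrightarrow> v i \<in> leaves V rt par"
    and inj: "inj_on v {0..<6}"
    and adj: "\<And>i j. i < 6 \<Longrightarrow> j < 6 \<Longrightarrow>
      rbmg_edge V rt par \<sigma> (v i) (v j) \<longleftrightarrow> j = (i + 1) mod 6 \<or> i = (j + 1) mod 6"
    and period: "\<And>i. i < 6 \<Longrightarrow> \<sigma> (v ((i + 3) mod 6)) = \<sigma> (v i)"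
  shows False
proof -
  have "\<And>j. j \<le> Suc 4 \<Longrightarrow> v j \<in> V" using L leaf_in_V by simp
  then obtain i where i: "i \<le> 4"
    and top: "\<forall>j\<le>5. anc par (v j) (lca V par (v i) (v (Suc i)))"
    using consecutive_lca_top[of 4 v] by auto
  let ?i' = "(i + 3) mod 6"
  have cases: "i = 0 \<or> i = 1 \<or> i = 2 \<or> i = 3 \<or> i = 4" using i by arith
  have lt: "i < 6" "Suc i < 6" "?i' < 6" using i by auto
  have "i \<noteq> Suc i" "i \<noteq> ?i'" "Suc i \<noteq> ?i'" using cases by auto
  then have ne: "v i \<noteq> v (Suc i)" "v i \<noteq> v ?i'" "v (Suc i) \<noteq> v ?i'"
    using inj_on_contraD[OF inj] lt by simp_all
  have "rbmg_edge V rt par \<sigma> (v i) (v (Suc i))" using adj[OF lt(1,2)] lt(2) by simp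
  moreover have "anc par (v ?i') (lca V par (v i) (v (Suc i)))" using top lt(3) by simp
  ultimately have "rbmg_edge V rt par \<sigma> (v ?i') (v (Suc i))"
    using rbmg_edge_to_same_colour_below[OF L[OF lt(1)] L[OF lt(2)] L[OF lt(3)] ne]
      period[OF lt(1)] by simp
  moreover have "\<not> (Suc i = (?i' + 1) mod 6 \<or> ?i' = (Suc i + 1) mod 6)"
    using cases by auto
  ultimately show False using adj[OF lt(3,2)] by blast
qed

end

lemma planted_binary_parent_tree:
  assumes "planted_phylo_tree V rt par"
    and "\<forall>v\<in>inner_vertices V rt par. card (children V rt par v) = 2"
  shows "binary_parent_tree V rt par"
proof -
  have "parent_tree V rt par"
    using assms(1) unfolding planted_phylo_tree_def by unfold_locales simp
  moreover have "card (children V rt par w) \<le> 2" if "w \<in> V" for w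
    using assms that unfolding planted_phylo_tree_def inner_vertices_def leaves_def
    by (cases "w = rt") auto
  ultimately show ?thesis
    by (simp add: binary_parent_tree_axioms_def binary_parent_tree_def)
qed

lemma cyclic_three_colouring_period:
  fixes c :: "nat \<Rightarrow> 'c"
  assumes colours: "\<And>i. i < n \<Longrightarrow> c i \<in> {r, s, t}"
    and distinct: "\<And>i. i < n \<Longrightarrow>
      c i \<noteq> c ((i + 1) mod n) \<and> c i \<noteq> c ((i + 2) mod n) \<and> c ((i + 1) mod n) \<noteq> c ((i + 2) mod n)"
    and "i < n"
  shows "c ((i + 3) mod n) = c i"
proof -
  have mod: "((i + 1) mod n + 1) mod n = (i + 2) mod n" "((i + 1) mod n + 2) mod n = (i + 3) mod n"
    by (simp_all add: mod_Suc_eq mod_Suc_Suc_eq numeral_3_eq_3)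
  have "(i + 1) mod n < n" using \<open>i < n\<close> by simp
  then have "c ((i + 1) mod n) \<noteq> c ((i + 2) mod n)" "c ((i + 1) mod n) \<noteq> c ((i + 3) mod n)"
    "c ((i + 2) mod n) \<noteq> c ((i + 3) mod n)"
    using distinct[of "(i + 1) mod n"] unfolding mod by simp_all
  moreover have "c i \<noteq> c ((i + 1) mod n)" "c i \<noteq> c ((i + 2) mod n)"
    using distinct[OF \<open>i < n\<close>] by simp_all
  moreover have "c ((i + k) mod n) \<in> {r, s, t}" for k
    using colours \<open>i < n\<close> by simp
  ultimately show ?thesis
    using colours[OF \<open>i < n\<close>] by (metis insertE singletonD)
qed

lemma component_subset: "x \<in> H \<Longrightarrow> component E H x \<subseteq> H"
  unfolding component_def by (auto elim: rtranclE)

theorem mainTheorem19: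
  fixes V :: "'v set" and rt :: 'v and par :: "'v \<Rightarrow> 'v" and \<sigma> :: "'v \<Rightarrow> 'c"
    and r s t :: 'c
  assumes "planted_phylo_tree V rt par"
    and "\<forall>v\<in>inner_vertices V rt par. card (children V rt par v) = 2"
    and "r \<noteq> s" and "r \<noteq> t" and "s \<noteq> t"
  shows "\<not> (\<exists>C. is_component (rbmg_edge V rt par \<sigma>) (col_verts V rt par \<sigma> {r, s, t}) C \<and>
               typeC (rbmg_edge V rt par \<sigma>) \<sigma> C)"
proof
  let ?H = "col_verts V rt par \<sigma> {r, s, t}"
  assume "\<exists>C. is_component (rbmg_edge V rt par \<sigma>) ?H C \<and> typeC (rbmg_edge V rt par \<sigma>) \<sigma> C"
  then obtain x and v :: "nat \<Rightarrow> 'v" where x: "x \<in> ?H"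
    and in_C: "\<forall>i<6. v i \<in> component (rbmg_edge V rt par \<sigma>) ?H x"
    and inj: "inj_on v {0..<6}"
    and adj: "\<forall>i<6. \<forall>j<6. rbmg_edge V rt par \<sigma> (v i) (v j) \<longleftrightarrow> (j = (i + 1) mod 6 \<or> i = (j + 1) mod 6)"
    and distinct: "\<forall>i<6. \<sigma> (v i) \<noteq> \<sigma> (v ((i + 1) mod 6)) \<and> \<sigma> (v i) \<noteq> \<sigma> (v ((i + 2) mod 6)) \<and>
            \<sigma> (v ((i + 1) mod 6)) \<noteq> \<sigma> (v ((i + 2) mod 6))"
    unfolding is_component_def typeC_def by blast
  have "v i \<in> ?H" if "i < 6" for i
    using component_subset[OF x] in_C that by blast
  then have L: "v i \<in> leaves V rt par" and colours: "\<sigma> (v i) \<in> {r, s, t}" if "i < 6" for i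
    using that unfolding col_verts_def by auto
  interpret binary_parent_tree V rt par
    using planted_binary_parent_tree assms(1,2) .
  show False
  proof (rule no_rbmg_hexagon[OF L inj])
    show "rbmg_edge V rt par \<sigma> (v i) (v j) \<longleftrightarrow> j = (i + 1) mod 6 \<or> i = (j + 1) mod 6"
      if "i < 6" "j < 6" for i j
      using adj that by blast
    show "\<sigma> (v ((i + 3) mod 6)) = \<sigma> (v i)" if "i < 6" for i
      by (rule cyclic_three_colouring_period[where c = "\<lambda>i. \<sigma> (v i)", OF colours])
        (use distinct that in auto)
  qed
qed

end
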